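(* Let $f,g\in\mathcal B_1(2^\omega)$. If $|f|_\alpha<|g|_\alpha$ then $f\le_{\mathbf m} g$. If $|f|_\alpha=|g|_\alpha$, then $f\le_{\mathbf m} g$ if and only if at least one of the following holds: (1) $|f|_\alpha$ is a limit ordinal; (2) $g$ is two-sided; (3) $f$ is one-sided and $g$ is neither right-sided nor left-sided; (4) $f$ and $g$ are both right-sided, or both left-sided.
   Context: $\mathcal B_1(2^\omega)$ is the set of functions $2^\omega\to\mathbb R$ that are pointwise limits of sequences of continuous functions. Optimal derivation sequence: for $\mathcal C\subseteq\mathcal P(X)$, $X$ a compact metric space, define $P^0=X$, $P^{\nu+1}=P^\nu\setminus\bigcup\{U\subseteq X \text{ open}: P^\nu\cap U\subseteq C\text{ for some }C\in\mathcal C\}$, and $P^\lambda=\bigcap_{\nu<\lambda}P^\nu$ for limit $\lambda$. Bourgain rank: for $f\in\mathcal B_1(2^\omega)$, $p\in\mathbb Q$, $\varepsilon\in\mathbb Q^+$, let $P^\nu_{f,p,\varepsilon}$ be the optimal derivation sequence for $\{f^{-1}((-\infty,p+\varepsilon)),f^{-1}((p-\varepsilon,\infty))\}$, let $\alpha(f,p,\varepsilon)$ be the least $\nu$ with $P^\nu_{f,p,\varepsilon}=\emptyset$ (it exists and is a successor), and $|f|_\alpha=\sup_{p,\varepsilon}\alpha(f,p,\varepsilon)$. Sidedness: suppose $|f|_\alpha=\nu+1$. A pair $(p,\varepsilon)$ is maximal for $f$ if $\alpha(f,p,\varepsilon)=\nu+1$ and $f(P^\nu_{f,p,\varepsilon})\setminus(p-\varepsilon,p+\varepsilon)\ne\emptyset$.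 $f$ is two-sided if there is a maximal $(p,\varepsilon)$ with $f(P^\nu_{f,p,\varepsilon})\not\subseteq(p-\varepsilon,\infty)$ and $f(P^\nu_{f,p,\varepsilon})\not\subseteq(-\infty,p+\varepsilon)$; one-sided otherwise; left-sided if for every maximal $(p,\varepsilon)$, $f(P^\nu_{f,p,\varepsilon})\subseteq(-\infty,p+\varepsilon)$; right-sided if for every maximal $(p,\varepsilon)$, $f(P^\nu_{f,p,\varepsilon})\subseteq(p-\varepsilon,\infty)$. Questions: for $y\in\mathbb R$, $p\in\mathbb Q$, $\varepsilon\in\mathbb Q^+$, a bit $b\in\{0,1\}$ is a correct answer to "$y\lesssim_\varepsilon p$" if either $b=1$ and $y<p+\varepsilon$, or $b=0$ and $y>p-\varepsilon$. $f\le_{\mathbf m} g$ means: for every $p\in\mathbb Q,\varepsilon\in\mathbb Q^+$ there are $q\in\mathbb Q,\delta\in\mathbb Q^+$ and a continuous $k:2^\omega\to2^\omega$ such that for every $A\in2^\omega$, every correct answer to $g(k(A))\lesssim_\delta q$ is a correct answer to $f(A)\lesssim_\varepsilon p$. *)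

theory Defs
  imports "HOL-Analysis.Analysis"
begin

text \<open>Ordinals are modelled by the elements of
an arbitrary uncountable well-ordered type 'o (it contains an initial segment
of order type omega_1, which is all that is needed).\<close>

type_synonym cantor = "nat \<Rightarrow> bool"

definition baire1 :: "(cantor \<Rightarrow> real) \<Rightarrow> bool" where
  "baire1 f \<longleftrightarrow> (\<exists>fn :: nat \<Rightarrow> cantor \<Rightarrow> real.
      (\<forall>n. continuous_on UNIV (fn n)) \<and> (\<forall>x. (\<lambda>n. fn n x) \<longlonglongrightarrow> f x))"

text \<open>nu = mu + 1 in the well-order\<close>
definition is_succ_of :: "'o::wellorder \<Rightarrow> 'o \<Rightarrow> bool" where
  "is_succ_of \<mu> \<nu> \<longleftrightarrow> \<mu> < \<nu> \<and> (\<forall>\<eta><\<nu>. \<eta> \<le> \<mu>)"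

definition is_limit :: "'o::wellorder \<Rightarrow> bool" where
  "is_limit \<nu> \<longleftrightarrow> (\<exists>\<mu>. \<mu> < \<nu>) \<and> \<not> (\<exists>\<mu>. is_succ_of \<mu> \<nu>)"

definition deriv_step :: "cantor set set \<Rightarrow> cantor set \<Rightarrow> cantor set" where
  "deriv_step C P = P - \<Union>{U. open U \<and> (\<exists>c\<in>C. P \<inter> U \<subseteq> c)}"

text \<open>Optimal derivation sequence: P^0 = X (empty intersection), successor
steps apply deriv_step, limit steps intersect.\<close>
definition opt_deriv :: "cantor set set \<Rightarrow> 'o::wellorder \<Rightarrow> cantor set" where
  "opt_deriv C = wfrec {(x, y). x < y}
     (\<lambda>R \<nu>. if (\<exists>\<mu>. is_succ_of \<mu> \<nu>)
            then deriv_step C (R (THE \<mu>. is_succ_of \<mu> \<nu>))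
            else \<Inter> (R ` {\<mu>. \<mu> < \<nu>}))"

definition bfam :: "(cantor \<Rightarrow> real) \<Rightarrow> rat \<Rightarrow> rat \<Rightarrow> cantor set set" where
  "bfam f p \<epsilon> = {f -` {..< of_rat p + of_rat \<epsilon>}, f -` {of_rat p - of_rat \<epsilon> <..}}"

definition Pseq :: "(cantor \<Rightarrow> real) \<Rightarrow> rat \<Rightarrow> rat \<Rightarrow> 'o::wellorder \<Rightarrow> cantor set" where
  "Pseq f p \<epsilon> \<nu> = opt_deriv (bfam f p \<epsilon>) \<nu>"

definition alpha :: "(cantor \<Rightarrow> real) \<Rightarrow> rat \<Rightarrow> rat \<Rightarrow> 'o::wellorder" where
  "alpha f p \<epsilon> = (LEAST \<nu>. Pseq f p \<epsilon> \<nu> = {})"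

definition brank :: "(cantor \<Rightarrow> real) \<Rightarrow> 'o::wellorder" where
  "brank f = (LEAST \<nu>. \<forall>p \<epsilon>. \<epsilon> > 0 \<longrightarrow> alpha f p \<epsilon> \<le> \<nu>)"

definition maximal_pair :: "(cantor \<Rightarrow> real) \<Rightarrow> 'o::wellorder \<Rightarrow> rat \<Rightarrow> rat \<Rightarrow> bool" where
  "maximal_pair f \<nu> p \<epsilon> \<longleftrightarrow> \<epsilon> > 0 \<and> is_succ_of \<nu> (brank f) \<and> (alpha f p \<epsilon> :: 'o) = brank f \<and>
     f ` (Pseq f p \<epsilon> \<nu>) - {of_rat p - of_rat \<epsilon> <..< of_rat p + of_rat \<epsilon>} \<noteq> {}"

definition two_sided :: "'o::wellorder itself \<Rightarrow> (cantor \<Rightarrow> real) \<Rightarrow> bool" where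
  "two_sided (_::'o itself) f \<longleftrightarrow> (\<exists>(\<nu>::'o) p \<epsilon>. maximal_pair f \<nu> p \<epsilon> \<and>
     \<not> f ` (Pseq f p \<epsilon> \<nu>) \<subseteq> {of_rat p - of_rat \<epsilon> <..} \<and>
     \<not> f ` (Pseq f p \<epsilon> \<nu>) \<subseteq> {..< of_rat p + of_rat \<epsilon>})"

definition one_sided :: "'o::wellorder itself \<Rightarrow> (cantor \<Rightarrow> real) \<Rightarrow> bool" where
  "one_sided T f \<longleftrightarrow> \<not> two_sided T f"

definition left_sided :: "'o::wellorder itself \<Rightarrow> (cantor \<Rightarrow> real) \<Rightarrow> bool" where
  "left_sided (_::'o itself) f \<longleftrightarrow> (\<forall>(\<nu>::'o) p \<epsilon>. maximal_pair f \<nu> p \<epsilon> \<longrightarrow>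
     f ` (Pseq f p \<epsilon> \<nu>) \<subseteq> {..< of_rat p + of_rat \<epsilon>})"

definition right_sided :: "'o::wellorder itself \<Rightarrow> (cantor \<Rightarrow> real) \<Rightarrow> bool" where
  "right_sided (_::'o itself) f \<longleftrightarrow> (\<forall>(\<nu>::'o) p \<epsilon>. maximal_pair f \<nu> p \<epsilon> \<longrightarrow>
     f ` (Pseq f p \<epsilon> \<nu>) \<subseteq> {of_rat p - of_rat \<epsilon> <..})"

text \<open>b is a correct answer to the question "y <~_eps p" (b = True means 1).\<close>
definition correct_answer :: "bool \<Rightarrow> real \<Rightarrow> rat \<Rightarrow> rat \<Rightarrow> bool" where
  "correct_answer b y p \<epsilon> \<longleftrightarrow> (b \<and> y < of_rat p + of_rat \<epsilon>) \<or> (\<not> b \<and> y > of_rat p - of_rat \<epsilon>)"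

definition m_reducible :: "(cantor \<Rightarrow> real) \<Rightarrow> (cantor \<Rightarrow> real) \<Rightarrow> bool" where
  "m_reducible f g \<longleftrightarrow> (\<forall>p \<epsilon>. \<epsilon> > 0 \<longrightarrow> (\<exists>q \<delta> (k::cantor \<Rightarrow> cantor). \<delta> > 0 \<and> continuous_on UNIV k \<and>
     (\<forall>A b. correct_answer b (g (k A)) q \<delta> \<longrightarrow> correct_answer b (f A) p \<epsilon>)))"

end

theory Submission
  imports Defs
begin

text \<open>Fix a rational pair (p, eps) for f and let A, B be the sets where f is at least p + eps,
  resp. at most p - eps. Then P^nu is the derivation of the pair (A, B), which at each step
  removes the points having a neighbourhood that misses A or misses B, and a continuous k
  answers (p, eps) for f through (q, delta) for g iff it maps A and B into the corresponding
  sets C and D of g. Such a k pulls the derivation of (C, D) back over that of (A, B), which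
  gives the necessary conditions. Conversely, by induction on nu, every clopen set avoiding
  stage nu of (A, B) reduces into any neighbourhood of any point of stage nu of (C, D): at a
  successor the part of the stage in the set is locally one-sided, so it is covered by finitely
  many cylinders that are each collapsed onto a point of C or of D; at a limit, compactness
  reduces to an earlier stage. At the last nonempty stage of f this yields a reduction as soon
  as the last stage of g meets C, D, or both, as the sides of f require. By Baire's theorem each
  derivation reaches the empty set after countably many steps, so each alpha(f, p, eps) is a
  countable successor ordinal and the rank |f| is countable.\<close>

section \<open>Cantor space\<close>

lemma compact_UNIV_cantor: "compact (UNIV :: cantor set)"
proof -
  have "compact_space (euclidean :: bool topology)"
    by (simp add: compact_space_def finite_imp_compact)
  then have "compact_space (product_topology (\<lambda>i::nat. (euclidean :: bool topology)) UNIV)"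
    by (simp add: compact_space_product_topology)
  then show ?thesis
    by (simp add: euclidean_product_topology compact_space_def)
qed

lemma Hausdorff_space_cantor: "Hausdorff_space (euclidean :: cantor topology)"
proof -
  have "Hausdorff_space (euclidean :: bool topology)"
    unfolding Hausdorff_space_def disjnt_def by (metis hausdorff open_openin)
  then have "Hausdorff_space (product_topology (\<lambda>i::nat. (euclidean :: bool topology)) UNIV)"
    by (simp add: Hausdorff_space_product_topology)
  then show ?thesis
    by (simp only: euclidean_product_topology)
qed

lemma baire_cantor:
  fixes P :: "cantor set"
  assumes P: "closed P" "P \<noteq> {}" and closed: "\<And>T. T \<in> \<F> \<Longrightarrow> closed T"
    and cover: "P \<subseteq> \<Union>\<F>" and "countable \<F>"
  shows "\<exists>T\<in>\<F>. \<exists>U. open U \<and> P \<inter> U \<noteq> {} \<and> P \<inter> U \<subseteq> T"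
proof (rule ccontr)
  assume none: "\<not> ?thesis"
  define X where "X = subtopology euclidean P"
  have "compact_space X"
    unfolding X_def using compact_Int_closed[OF compact_UNIV_cantor P(1)]
    by (simp add: compact_space_subtopology)
  moreover have "Hausdorff_space X"
    unfolding X_def by (rule Hausdorff_space_subtopology[OF Hausdorff_space_cantor])
  ultimately have "X interior_of \<Union>((\<inter>) P ` \<F>) = {}"
  proof (intro Baire_category_alt disjI2 conjI)
    show "locally_compact_space X"
      using \<open>compact_space X\<close> by (rule compact_imp_locally_compact_space)
    show "regular_space X"
      using \<open>compact_space X\<close> \<open>Hausdorff_space X\<close> by (rule compact_Hausdorff_imp_regular_space)
    show "countable ((\<inter>) P ` \<F>)"
      using \<open>countable \<F>\<close> by simp
    fix S assume "S \<in> (\<inter>) P ` \<F>"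
    then obtain T where T: "T \<in> \<F>" "S = P \<inter> T" by blast
    show "closedin X S"
      unfolding X_def T(2) using closed[OF T(1)] by (simp add: closedin_subtopology_Int_closed)
    show "X interior_of S = {}"
      unfolding interior_of_eq_empty X_def openin_subtopology T(2)
    proof (intro allI impI)
      fix U assume "(\<exists>V. openin euclidean V \<and> U = V \<inter> P) \<and> U \<subseteq> P \<inter> T"
      then obtain V where "open V" "U = V \<inter> P" "U \<subseteq> T" by auto
      then show "U = {}" using none T(1) by blast
    qed
  qed
  moreover have "\<Union>((\<inter>) P ` \<F>) = topspace X" "topspace X = P"
    using cover unfolding X_def by auto
  ultimately show False
    using P(2) by (metis interior_of_topspace)
qed

definition cylinder :: "nat \<Rightarrow> cantor \<Rightarrow> cantor set" where
  "cylinder n x = {y. \<forall>i<n. y i = x i}"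

lemma cylinder_self [simp]: "x \<in> cylinder n x"
  by (simp add: cylinder_def)

lemma cylinder_antimono: "m \<le> n \<Longrightarrow> cylinder n x \<subseteq> cylinder m x"
  by (auto simp: cylinder_def)

lemma cylinder_eq: "y \<in> cylinder n x \<Longrightarrow> cylinder n y = cylinder n x"
  by (auto simp: cylinder_def)

lemma cylinder_sym: "y \<in> cylinder n x \<longleftrightarrow> x \<in> cylinder n y"
  by (auto simp: cylinder_def)

lemma cylinder_conv_prefix: "cylinder n x = {y. map y [0..<n] = map x [0..<n]}"
  by (auto simp: cylinder_def map_eq_conv)

lemma countable_cylinders: "countable (range (case_prod cylinder))"
proof -
  have "cylinder n x \<in> (\<lambda>(n, l). {y. map y [0..<n] = l}) ` UNIV" for n x
    by (rule image_eqI[where x = "(n, map x [0..<n])"]) (simp_all add: cylinder_conv_prefix)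
  then have "range (case_prod cylinder) \<subseteq> (\<lambda>(n, l). {y. map y [0..<n] = l}) ` UNIV"
    by auto
  then show ?thesis
    by (rule countable_subset) simp
qed

lemma open_cylinder: "open (cylinder n x)"
proof -
  have "cylinder n x = {y. \<forall>i\<in>{..<n}. y (id i) \<in> {x i}}"
    by (auto simp: cylinder_def)
  also have "open \<dots>"
    by (rule product_topology_basis') (auto simp: open_discrete)
  finally show ?thesis .
qed

lemma closed_cylinder_Union: "closed (\<Union>z\<in>S. cylinder n z)"
proof -
  have "- (\<Union>z\<in>S. cylinder n z) = (\<Union>y\<in>- (\<Union>z\<in>S. cylinder n z). cylinder n y)"
    by (auto simp: cylinder_def)
  then show ?thesis
    unfolding closed_def by (metis open_UN open_cylinder)
qed

lemma closed_cylinder: "closed (cylinder n x)"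
  using closed_cylinder_Union[of n "{x}"] by simp

lemma open_imp_cylinder_subset:
  assumes "open U" "x \<in> U"
  obtains n where "cylinder n x \<subseteq> U"
proof -
  have "openin (product_topology (\<lambda>i. euclidean) UNIV) U"
    using assms(1) by (simp add: open_fun_def)
  from product_topology_open_contains_basis[OF this assms(2)]
  obtain X :: "nat \<Rightarrow> bool set" where X: "x \<in> Pi\<^sub>E UNIV X" "finite {i. X i \<noteq> UNIV}" "Pi\<^sub>E UNIV X \<subseteq> U"
    by auto
  obtain n where n: "\<And>i. X i \<noteq> UNIV \<Longrightarrow> i < n"
    using finite_nat_bounded[OF X(2)] by auto
  have "cylinder n x \<subseteq> Pi\<^sub>E UNIV X"
    using X(1) n by (fastforce simp: cylinder_def)
  with X(3) show thesis
    by (intro that) blast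
qed

definition cylinder_nbhd :: "cantor set \<Rightarrow> nat \<Rightarrow> cantor set" where
  "cylinder_nbhd K n = (\<Union>z\<in>K. cylinder n z)"

lemma open_cylinder_nbhd: "open (cylinder_nbhd K n)"
  unfolding cylinder_nbhd_def using open_cylinder by blast

lemma closed_cylinder_nbhd: "closed (cylinder_nbhd K n)"
  unfolding cylinder_nbhd_def by (rule closed_cylinder_Union)

lemma subset_cylinder_nbhd: "K \<subseteq> cylinder_nbhd K n"
  unfolding cylinder_nbhd_def using cylinder_self by blast

lemma cylinder_nbhd_antimono: "m \<le> n \<Longrightarrow> cylinder_nbhd K n \<subseteq> cylinder_nbhd K m"
  unfolding cylinder_nbhd_def using cylinder_antimono by blast

lemma closed_imp_notin_cylinder_nbhd:
  assumes "closed K" "x \<notin> K"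
  obtains n where "x \<notin> cylinder_nbhd K n"
proof -
  obtain n where "cylinder n x \<subseteq> - K"
    using open_imp_cylinder_subset[of "- K" x] assms by auto
  then have "x \<notin> cylinder_nbhd K n"
    unfolding cylinder_nbhd_def using cylinder_sym by blast
  then show thesis by (rule that)
qed

text \<open>A Lebesgue number for covers of a compact set by cylinders.\<close>
lemma compact_uniform_cylinder:
  assumes "compact K" and local: "\<And>x. x \<in> K \<Longrightarrow> \<exists>m. good (cylinder m x)"
    and good_subset: "\<And>c c'. good c \<Longrightarrow> c' \<subseteq> c \<Longrightarrow> good c'"
  shows "\<exists>n. \<forall>z\<in>K. good (cylinder n z)"
proof -
  obtain m where m: "\<And>x. x \<in> K \<Longrightarrow> good (cylinder (m x) x)"
    using local by metis
  have cover: "K \<subseteq> (\<Union>x\<in>K. cylinder (m x) x)"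
    using cylinder_self by blast
  obtain F where F: "F \<subseteq> K" "finite F" "K \<subseteq> (\<Union>x\<in>F. cylinder (m x) x)"
    by (rule compactE_image[OF \<open>compact K\<close> _ cover]) (rule open_cylinder)
  have "good (cylinder (sum m F) z)" if "z \<in> K" for z
  proof -
    obtain x where x: "x \<in> F" "z \<in> cylinder (m x) x"
      using F(3) \<open>z \<in> K\<close> by blast
    have "cylinder (sum m F) z \<subseteq> cylinder (m x) z"
      using x(1) F(2) by (intro cylinder_antimono member_le_sum) auto
    also have "\<dots> = cylinder (m x) x"
      using x(2) by (rule cylinder_eq)
    finally show ?thesis
      using m F(1) x(1) good_subset by blast
  qed
  then show ?thesis by blast
qed

section \<open>Optimal derivation sequences\<close>

lemma is_succ_of_unique: "is_succ_of \<mu> \<nu> \<Longrightarrow> is_succ_of \<mu>' \<nu> \<Longrightarrow> \<mu> = \<mu>'"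
  unfolding is_succ_of_def by (meson order.antisym)

lemma is_succ_of_Least: "\<mu> < \<nu> \<Longrightarrow> is_succ_of \<mu> (LEAST s. \<mu> < s)"
  unfolding is_succ_of_def by (metis LeastI not_less_Least not_less)

lemma opt_deriv_unfold:
  "opt_deriv C \<nu> =
     (if \<exists>\<mu>. is_succ_of \<mu> \<nu> then deriv_step C (opt_deriv C (THE \<mu>. is_succ_of \<mu> \<nu>))
      else \<Inter> (opt_deriv C ` {\<mu>. \<mu> < \<nu>}))" (is "_ = ?rhs")
proof -
  have "opt_deriv C \<nu> = (\<lambda>R \<nu>. if \<exists>\<mu>. is_succ_of \<mu> \<nu> then deriv_step C (R (THE \<mu>. is_succ_of \<mu> \<nu>))
            else \<Inter> (R ` {\<mu>. \<mu> < \<nu>})) (cut (opt_deriv C) {(x, y). x < y} \<nu>) \<nu>"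
    unfolding opt_deriv_def by (rule wfrec[OF wf])
  also have "\<dots> = ?rhs"
  proof (cases "\<exists>\<mu>. is_succ_of \<mu> \<nu>")
    case True
    then obtain \<mu> where \<mu>: "is_succ_of \<mu> \<nu>" ..
    then have "(THE \<mu>. is_succ_of \<mu> \<nu>) = \<mu>" "\<mu> < \<nu>"
      using is_succ_of_unique by (blast, simp add: is_succ_of_def)
    then show ?thesis
      using True by (simp add: cut_apply)
  next
    case False
    have "cut (opt_deriv C) {(x, y). x < y} \<nu> ` {\<mu>. \<mu> < \<nu>} = opt_deriv C ` {\<mu>. \<mu> < \<nu>}"
      by (auto simp: cut_apply)
    then show ?thesis
      using False by simp
  qed
  finally show ?thesis .
qed

lemma opt_deriv_succ:
  assumes "is_succ_of \<mu> \<nu>"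
  shows "opt_deriv C \<nu> = deriv_step C (opt_deriv C \<mu>)"
proof -
  have "(THE \<mu>. is_succ_of \<mu> \<nu>) = \<mu>"
    using assms is_succ_of_unique by blast
  then show ?thesis
    using assms by (subst opt_deriv_unfold) auto
qed

lemma opt_deriv_nonsucc:
  "\<not> (\<exists>\<mu>. is_succ_of \<mu> \<nu>) \<Longrightarrow> opt_deriv C \<nu> = \<Inter> (opt_deriv C ` {\<mu>. \<mu> < \<nu>})"
  by (subst opt_deriv_unfold) auto

lemma opt_deriv_bot: "\<not> (\<exists>\<mu>. \<mu> < \<nu>) \<Longrightarrow> opt_deriv C \<nu> = UNIV"
  by (subst opt_deriv_nonsucc) (auto simp: is_succ_of_def)

lemma deriv_step_subset: "deriv_step C P \<subseteq> P"
  by (auto simp: deriv_step_def)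

lemma closed_deriv_step: "closed P \<Longrightarrow> closed (deriv_step C P)"
  unfolding deriv_step_def by (intro closed_Diff open_Union) auto

lemma opt_deriv_antimono: "\<mu> \<le> \<nu> \<Longrightarrow> opt_deriv C \<nu> \<subseteq> opt_deriv C \<mu>"
proof (induction \<nu> arbitrary: \<mu> rule: less_induct)
  case (less \<nu>)
  show ?case
  proof (cases "\<exists>\<eta>. is_succ_of \<eta> \<nu>")
    case True
    then obtain \<eta> where \<eta>: "is_succ_of \<eta> \<nu>" by blast
    then have \<eta>': "\<eta> < \<nu>" "\<mu> < \<nu> \<Longrightarrow> \<mu> \<le> \<eta>"
      by (simp_all add: is_succ_of_def)
    show ?thesis
    proof (cases "\<mu> = \<nu>")
      case False
      then have "opt_deriv C \<eta> \<subseteq> opt_deriv C \<mu>"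
        using less.IH \<eta>' less.prems by simp
      then show ?thesis
        using opt_deriv_succ[OF \<eta>] deriv_step_subset by blast
    qed simp
  next
    case False
    then show ?thesis
      using opt_deriv_nonsucc[OF False] less.prems by (cases "\<mu> = \<nu>") auto
  qed
qed

lemma opt_deriv_subset_deriv_step:
  assumes "\<mu> < \<nu>"
  shows "opt_deriv C \<nu> \<subseteq> deriv_step C (opt_deriv C \<mu>)"
proof -
  define s where "s = (LEAST s. \<mu> < s)"
  have s: "is_succ_of \<mu> s"
    unfolding s_def using assms by (rule is_succ_of_Least)
  moreover have "s \<le> \<nu>"
    unfolding s_def using assms by (rule Least_le)
  ultimately show ?thesis
    using opt_deriv_antimono opt_deriv_succ by metis
qed

lemma closed_opt_deriv: "closed (opt_deriv C \<nu>)"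
proof (induction \<nu> rule: less_induct)
  case (less \<nu>)
  show ?case
  proof (cases "\<exists>\<eta>. is_succ_of \<eta> \<nu>")
    case True
    then obtain \<eta> where \<eta>: "is_succ_of \<eta> \<nu>" by blast
    then have "\<eta> < \<nu>" by (simp add: is_succ_of_def)
    then show ?thesis
      using less.IH opt_deriv_succ[OF \<eta>] closed_deriv_step by metis
  next
    case False
    then show ?thesis
      using opt_deriv_nonsucc[OF False] less.IH by auto
  qed
qed

lemma opt_deriv_limit_disjoint:
  fixes \<nu> :: "'o::wellorder"
  assumes nonsucc: "\<not> (\<exists>\<mu>. is_succ_of \<mu> \<nu>)" and "\<mu>\<^sub>0 < \<nu>"
    and "closed W" and disjoint: "opt_deriv C \<nu> \<inter> W = {}"
  obtains \<mu> where "\<mu> < \<nu>" "opt_deriv C \<mu> \<inter> W = {}"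
proof -
  have "compact W"
    using compact_Int_closed[OF compact_UNIV_cantor \<open>closed W\<close>] by simp
  moreover have "W \<inter> \<Inter> (opt_deriv C ` {\<mu>. \<mu> < \<nu>}) = {}"
    using disjoint opt_deriv_nonsucc[OF nonsucc] by blast
  ultimately obtain F where F: "finite F" "F \<subseteq> opt_deriv C ` {\<mu>. \<mu> < \<nu>}" "W \<inter> \<Inter>F = {}"
    using compact_imp_fip[of W "opt_deriv C ` {\<mu>. \<mu> < \<nu>}"] closed_opt_deriv by blast
  then obtain I where I: "finite I" "I \<subseteq> {\<mu>. \<mu> < \<nu>}" "F = opt_deriv C ` I"
    by (meson finite_subset_image)
  define \<mu> where "\<mu> = Max (insert \<mu>\<^sub>0 I)"
  have "\<mu> < \<nu>"
    unfolding \<mu>_def using I \<open>\<mu>\<^sub>0 < \<nu>\<close> by (subst Max_less_iff) auto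
  moreover have "opt_deriv C \<mu> \<subseteq> opt_deriv C i" if "i \<in> I" for i
    using that I(1) by (intro opt_deriv_antimono) (simp add: \<mu>_def)
  then have "opt_deriv C \<mu> \<subseteq> \<Inter>F"
    unfolding I(3) by (simp add: INF_greatest)
  ultimately show thesis
    using F(3) that by blast
qed

abbreviation pair_step :: "cantor set \<Rightarrow> cantor set \<Rightarrow> cantor set \<Rightarrow> cantor set" where
  "pair_step A B \<equiv> deriv_step {- A, - B}"

abbreviation pair_deriv :: "cantor set \<Rightarrow> cantor set \<Rightarrow> 'o::wellorder \<Rightarrow> cantor set" where
  "pair_deriv A B \<equiv> opt_deriv {- A, - B}"

lemma mem_pair_step_iff:
  "x \<in> pair_step A B P \<longleftrightarrow>
     x \<in> P \<and> (\<forall>U. open U \<longrightarrow> x \<in> U \<longrightarrow> P \<inter> U \<inter> A \<noteq> {} \<and> P \<inter> U \<inter> B \<noteq> {})"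
proof -
  have "{U. open U \<and> (\<exists>c\<in>{- A, - B}. P \<inter> U \<subseteq> c)} = {U. open U \<and> (P \<inter> U \<inter> A = {} \<or> P \<inter> U \<inter> B = {})}"
    by auto
  then show ?thesis
    unfolding deriv_step_def by auto
qed

lemma pair_deriv_pullback:
  fixes \<nu> :: "'o::wellorder"
  assumes k: "continuous_on UNIV k" and "k ` A \<subseteq> C" "k ` B \<subseteq> D"
  shows "pair_deriv A B \<nu> \<subseteq> k -` pair_deriv C D \<nu>"
proof (induction \<nu> rule: less_induct)
  case (less \<nu>)
  show ?case
  proof (cases "\<exists>\<eta>. is_succ_of \<eta> \<nu>")
    case True
    then obtain \<eta> where \<eta>: "is_succ_of \<eta> \<nu>" by blast
    then have IH: "pair_deriv A B \<eta> \<subseteq> k -` pair_deriv C D \<eta>"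
      using less.IH by (simp add: is_succ_of_def)
    have "k x \<in> pair_step C D (pair_deriv C D \<eta>)" if x: "x \<in> pair_step A B (pair_deriv A B \<eta>)" for x
      unfolding mem_pair_step_iff
    proof (intro conjI allI impI)
      show "k x \<in> pair_deriv C D \<eta>"
        using x IH by (auto simp: mem_pair_step_iff)
      fix U assume U: "open U" "k x \<in> U"
      then have "open (k -` U)"
        using k U(1) continuous_on_open_vimage[OF open_UNIV, of k] by simp
      then have "pair_deriv A B \<eta> \<inter> k -` U \<inter> A \<noteq> {} \<and> pair_deriv A B \<eta> \<inter> k -` U \<inter> B \<noteq> {}"
        using x U(2) by (simp add: mem_pair_step_iff)
      then show "pair_deriv C D \<eta> \<inter> U \<inter> C \<noteq> {}" "pair_deriv C D \<eta> \<inter> U \<inter> D \<noteq> {}"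
        using IH assms(2,3) by blast+
    qed
    then show ?thesis
      using opt_deriv_succ[OF \<eta>] by auto
  next
    case False
    then show ?thesis
      unfolding opt_deriv_nonsucc[OF False] using less.IH by blast
  qed
qed

lemma pair_deriv_mono:
  fixes \<nu> :: "'o::wellorder"
  shows "A \<subseteq> C \<Longrightarrow> B \<subseteq> D \<Longrightarrow> pair_deriv A B \<nu> \<subseteq> pair_deriv C D \<nu>"
  using pair_deriv_pullback[of id A C B D \<nu>] by simp

text \<open>If no nonempty closed set has both A and B dense in it, the derivation strictly shrinks
  at every nonempty stage; a witnessing cylinder, which can only be removed once, codes the
  stage, so only countably many stages are nonempty.\<close>
lemma countable_pair_deriv_nonempty:
  assumes sep: "\<And>P. closed P \<Longrightarrow> P \<noteq> {} \<Longrightarrow>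
      \<exists>U. open U \<and> P \<inter> U \<noteq> {} \<and> (P \<inter> U \<inter> A = {} \<or> P \<inter> U \<inter> B = {})"
  shows "countable {\<nu>::'o::wellorder. pair_deriv A B \<nu> \<noteq> {}}"
proof -
  define S where "S = {\<nu>::'o. pair_deriv A B \<nu> \<noteq> {}}"
  define witness where "witness \<nu> c \<longleftrightarrow> c \<in> range (case_prod cylinder) \<and> pair_deriv A B \<nu> \<inter> c \<noteq> {} \<and>
      (pair_deriv A B \<nu> \<inter> c \<inter> A = {} \<or> pair_deriv A B \<nu> \<inter> c \<inter> B = {})" for \<nu> :: 'o and c
  have "\<forall>\<nu>\<in>S. \<exists>c. witness \<nu> c"
  proof
    fix \<nu> assume "\<nu> \<in> S"
    then have "pair_deriv A B \<nu> \<noteq> {}"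
      by (simp add: S_def)
    from sep[OF closed_opt_deriv this] obtain U where U: "open U" "pair_deriv A B \<nu> \<inter> U \<noteq> {}"
      "pair_deriv A B \<nu> \<inter> U \<inter> A = {} \<or> pair_deriv A B \<nu> \<inter> U \<inter> B = {}"
      by blast
    then obtain x where x: "x \<in> pair_deriv A B \<nu>" "x \<in> U" by blast
    obtain n where n: "cylinder n x \<subseteq> U"
      using open_imp_cylinder_subset[OF U(1) x(2)] .
    have "cylinder n x \<in> range (case_prod cylinder)"
      by (rule range_eqI[of _ _ "(n, x)"]) simp
    moreover have "pair_deriv A B \<nu> \<inter> cylinder n x \<noteq> {}"
      using x(1) cylinder_self[of x n] by blast
    moreover have "pair_deriv A B \<nu> \<inter> cylinder n x \<inter> A = {} \<or> pair_deriv A B \<nu> \<inter> cylinder n x \<inter> B = {}"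
      using U(3) n by blast
    ultimately have "witness \<nu> (cylinder n x)"
      unfolding witness_def by blast
    then show "\<exists>c. witness \<nu> c" ..
  qed
  then obtain c where c: "\<And>\<nu>. \<nu> \<in> S \<Longrightarrow> witness \<nu> (c \<nu>)"
    by (metis bchoice)
  have cyl: "c \<nu> \<in> range (case_prod cylinder)" and ne: "pair_deriv A B \<nu> \<inter> c \<nu> \<noteq> {}"
    if "\<nu> \<in> S" for \<nu>
    using c[OF that] unfolding witness_def by simp_all
  have removed: "c \<nu> \<inter> pair_deriv A B \<nu>' = {}" if "\<nu> \<in> S" "\<nu> < \<nu>'" for \<nu> \<nu>'
  proof (rule ccontr)
    assume "c \<nu> \<inter> pair_deriv A B \<nu>' \<noteq> {}"
    then obtain z where z: "z \<in> c \<nu>" "z \<in> pair_step A B (pair_deriv A B \<nu>)"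
      using opt_deriv_subset_deriv_step[OF \<open>\<nu> < \<nu>'\<close>, of "{- A, - B}"] by blast
    obtain n x where "c \<nu> = cylinder n x"
      using cyl[OF \<open>\<nu> \<in> S\<close>] by auto
    then have "open (c \<nu>)"
      by (simp add: open_cylinder)
    with z have "pair_deriv A B \<nu> \<inter> c \<nu> \<inter> A \<noteq> {} \<and> pair_deriv A B \<nu> \<inter> c \<nu> \<inter> B \<noteq> {}"
      unfolding mem_pair_step_iff by blast
    then show False
      using c[OF \<open>\<nu> \<in> S\<close>] unfolding witness_def by blast
  qed
  have "inj_on c S"
  proof (rule inj_onI)
    fix \<nu> \<nu>' assume "\<nu> \<in> S" "\<nu>' \<in> S" "c \<nu> = c \<nu>'"
    then show "\<nu> = \<nu>'"
      using removed ne by (metis inf_commute linorder_cases)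
  qed
  moreover have "countable (c ` S)"
    using cyl countable_cylinders by (blast intro: countable_subset)
  ultimately show ?thesis
    unfolding S_def by (rule countable_image_inj_on[rotated])
qed

section \<open>Continuous reductions between pairs of sets\<close>

definition reduces_within ::
    "cantor set \<Rightarrow> cantor set \<Rightarrow> cantor set \<Rightarrow> cantor set \<Rightarrow> cantor set \<Rightarrow> cantor set \<Rightarrow> bool" where
  "reduces_within W V A B C D \<longleftrightarrow>
     (\<exists>k. continuous_on W k \<and> k ` W \<subseteq> V \<and> (\<forall>x\<in>W \<inter> A. k x \<in> C) \<and> (\<forall>x\<in>W \<inter> B. k x \<in> D))"

abbreviation reduces :: "cantor set \<Rightarrow> cantor set \<Rightarrow> cantor set \<Rightarrow> cantor set \<Rightarrow> bool" where
  "reduces \<equiv> reduces_within UNIV UNIV"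

lemma reduces_within_empty: "reduces_within {} V A B C D"
  unfolding reduces_within_def by (intro exI[of _ id]) simp

lemma reduces_pair_deriv_meets:
  fixes \<nu> :: "'o::wellorder"
  assumes "reduces A B C D"
  shows "pair_deriv A B \<nu> \<inter> A \<noteq> {} \<Longrightarrow> pair_deriv C D \<nu> \<inter> C \<noteq> {}"
    and "pair_deriv A B \<nu> \<inter> B \<noteq> {} \<Longrightarrow> pair_deriv C D \<nu> \<inter> D \<noteq> {}"
proof -
  obtain k where k: "continuous_on UNIV k" "k ` A \<subseteq> C" "k ` B \<subseteq> D"
    using assms unfolding reduces_within_def by auto
  note pullback = pair_deriv_pullback[OF k, of \<nu>]
  show "pair_deriv A B \<nu> \<inter> A \<noteq> {} \<Longrightarrow> pair_deriv C D \<nu> \<inter> C \<noteq> {}"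
    using pullback k(2) by blast
  show "pair_deriv A B \<nu> \<inter> B \<noteq> {} \<Longrightarrow> pair_deriv C D \<nu> \<inter> D \<noteq> {}"
    using pullback k(3) by blast
qed

lemma reduces_within_disjoint_Union:
  assumes open_pieces: "\<And>c. c \<in> S \<Longrightarrow> open c" and "pairwise disjnt S" and "W \<subseteq> \<Union>S"
    and pieces: "\<And>c. c \<in> S \<Longrightarrow> reduces_within c V A B C D"
  shows "reduces_within W V A B C D"
proof -
  have "\<forall>c\<in>S. \<exists>h. continuous_on c h \<and> h ` c \<subseteq> V \<and> (\<forall>x\<in>c \<inter> A. h x \<in> C) \<and> (\<forall>x\<in>c \<inter> B. h x \<in> D)"
    using pieces unfolding reduces_within_def by blast
  then obtain H where H: "\<And>c. c \<in> S \<Longrightarrow> continuous_on c (H c) \<and> H c ` c \<subseteq> V \<and>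
      (\<forall>x\<in>c \<inter> A. H c x \<in> C) \<and> (\<forall>x\<in>c \<inter> B. H c x \<in> D)"
    by (metis bchoice)
  define k where "k x = H (THE c. c \<in> S \<and> x \<in> c) x" for x
  have k: "k x = H c x" if "c \<in> S" "x \<in> c" for c x
  proof -
    have "(THE c. c \<in> S \<and> x \<in> c) = c"
      using that \<open>pairwise disjnt S\<close> by (intro the_equality) (auto simp: pairwise_def disjnt_def)
    then show ?thesis
      by (simp add: k_def)
  qed
  have "continuous_on (\<Union>S) k"
  proof (rule continuous_on_open_Union)
    fix c assume "c \<in> S"
    then show "open c"
      by (rule open_pieces)
    show "continuous_on c k"
      using H[OF \<open>c \<in> S\<close>] k[OF \<open>c \<in> S\<close>] by (metis continuous_on_eq)
  qed
  then have "continuous_on W k"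
    using \<open>W \<subseteq> \<Union>S\<close> by (rule continuous_on_subset)
  moreover have "k x \<in> V \<and> (x \<in> A \<longrightarrow> k x \<in> C) \<and> (x \<in> B \<longrightarrow> k x \<in> D)" if "x \<in> W" for x
  proof -
    obtain c where c: "c \<in> S" "x \<in> c"
      using \<open>x \<in> W\<close> \<open>W \<subseteq> \<Union>S\<close> by blast
    then show ?thesis
      using H[OF c(1)] k[OF c] by (simp add: image_subset_iff)
  qed
  ultimately show ?thesis
    unfolding reduces_within_def by blast
qed

text \<open>Layer n of W - K: the points whose longest common prefix with a point of K has length
  n - 1 (layer 0 is all of W when K is empty).\<close>
definition layer :: "cantor set \<Rightarrow> cantor set \<Rightarrow> nat \<Rightarrow> cantor set" where
  "layer W K n = W \<inter> (\<Inter>m<n. cylinder_nbhd K m) - cylinder_nbhd K n"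

lemma open_layer: "open W \<Longrightarrow> open (layer W K n)"
  unfolding layer_def
  by (intro open_Diff open_Int open_INT closed_cylinder_nbhd) (auto simp: open_cylinder_nbhd)

lemma closed_layer: "closed W \<Longrightarrow> closed (layer W K n)"
  unfolding layer_def
  by (intro closed_Diff closed_Int closed_INT open_cylinder_nbhd) (auto simp: closed_cylinder_nbhd)

lemma layer_subset: "layer W K n \<subseteq> W - K"
  using subset_cylinder_nbhd by (auto simp: layer_def)

lemma layer_less: "x \<in> layer W K n \<Longrightarrow> x \<in> cylinder_nbhd K m \<Longrightarrow> m < n"
  using cylinder_nbhd_antimono[of n m K] by (force simp: layer_def)

lemma Least_layer: "x \<in> layer W K n \<Longrightarrow> (LEAST n. x \<in> layer W K n) = n"
  by (rule Least_equality) (auto simp: layer_def not_less dest: layer_less)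

lemma exists_layer:
  assumes "closed K" "x \<in> W" "x \<notin> K"
  obtains n where "x \<in> layer W K n"
proof -
  obtain n where "x \<notin> cylinder_nbhd K n"
    using closed_imp_notin_cylinder_nbhd[OF assms(1,3)] .
  then have "x \<notin> cylinder_nbhd K (LEAST n. x \<notin> cylinder_nbhd K n)"
    by (rule LeastI)
  moreover have "x \<in> cylinder_nbhd K m" if "m < (LEAST n. x \<notin> cylinder_nbhd K n)" for m
    using not_less_Least[OF that] by simp
  ultimately have "x \<in> layer W K (LEAST n. x \<notin> cylinder_nbhd K n)"
    using \<open>x \<in> W\<close> unfolding layer_def by blast
  then show thesis
    by (rule that)
qed

lemma continuous_on_collapse:
  assumes "closed K" "open W"
    and cont: "\<And>n. continuous_on (layer W K n) (h n)"
    and into: "\<And>n. h n ` layer W K n \<subseteq> cylinder n y"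
  shows "continuous_on W (\<lambda>x. if x \<in> K then y else h (LEAST n. x \<in> layer W K n) x)"
    (is "continuous_on W ?k")
proof -
  have k_layer: "?k x = h n x" if "x \<in> layer W K n" for x n
    using that layer_subset Least_layer by fastforce
  have near_K: "?k z \<in> cylinder m y" if "z \<in> W" "z \<in> cylinder_nbhd K m" for z m
  proof (cases "z \<in> K")
    case False
    then obtain n where n: "z \<in> layer W K n"
      using exists_layer \<open>closed K\<close> \<open>z \<in> W\<close> by metis
    have "cylinder n y \<subseteq> cylinder m y"
      using layer_less[OF n that(2)] by (simp add: cylinder_antimono)
    moreover have "h n z \<in> cylinder n y"
      using into[of n] n by blast
    ultimately show ?thesis
      using k_layer[OF n] by auto
  qed (simp only: if_True cylinder_self)
  show ?thesis
    unfolding continuous_on_topological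
  proof (intro ballI allI impI)
    fix x U assume x: "x \<in> W" and U: "open U" "?k x \<in> U"
    show "\<exists>A. open A \<and> x \<in> A \<and> (\<forall>z\<in>W. z \<in> A \<longrightarrow> ?k z \<in> U)"
    proof (cases "x \<in> K")
      case True
      then have "y \<in> U"
        using U(2) by simp
      then obtain m where m: "cylinder m y \<subseteq> U"
        using open_imp_cylinder_subset[OF U(1)] by blast
      show ?thesis
      proof (intro exI conjI ballI impI)
        show "open (cylinder_nbhd K m)" "x \<in> cylinder_nbhd K m"
          using True subset_cylinder_nbhd open_cylinder_nbhd by blast+
        fix z assume "z \<in> W" "z \<in> cylinder_nbhd K m"
        then show "?k z \<in> U"
          using near_K m by blast
      qed
    next
      case False
      then obtain n where n: "x \<in> layer W K n"
        using exists_layer[OF \<open>closed K\<close> x] by blast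
      then have "h n x \<in> U"
        using U(2) k_layer by simp
      then obtain A where A: "open A" "x \<in> A" "\<forall>z\<in>layer W K n. z \<in> A \<longrightarrow> h n z \<in> U"
        using cont[of n] n U(1) unfolding continuous_on_topological by metis
      show ?thesis
      proof (intro exI conjI ballI impI)
        show "open (A \<inter> layer W K n)" "x \<in> A \<inter> layer W K n"
          using A(1,2) n open_layer[OF \<open>open W\<close>] by auto
        fix z assume "z \<in> W" "z \<in> A \<inter> layer W K n"
        then show "?k z \<in> U"
          using A(3) k_layer[of z n] by simp
      qed
    qed
  qed
qed

definition reduces_below :: "cantor set \<Rightarrow> cantor set \<Rightarrow> cantor set \<Rightarrow> cantor set \<Rightarrow> 'o::wellorder \<Rightarrow> bool"
  where "reduces_below A B C D \<nu> \<longleftrightarrow>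
    (\<forall>W y V. open W \<longrightarrow> closed W \<longrightarrow> pair_deriv A B \<nu> \<inter> W = {} \<longrightarrow> y \<in> pair_deriv C D \<nu> \<longrightarrow>
      open V \<longrightarrow> y \<in> V \<longrightarrow> reduces_within W V A B C D)"

lemma reduces_belowD:
  "reduces_below A B C D \<nu> \<Longrightarrow> open W \<Longrightarrow> closed W \<Longrightarrow> pair_deriv A B \<nu> \<inter> W = {} \<Longrightarrow>
    y \<in> pair_deriv C D \<nu> \<Longrightarrow> open V \<Longrightarrow> y \<in> V \<Longrightarrow> reduces_within W V A B C D"
  unfolding reduces_below_def by blast

text \<open>The part of the stage inside W is sent to y; its complement in W splits into clopen
  layers avoiding the stage, and layer n is reduced into the n-th cylinder around y.\<close>
lemma reduces_within_collapse:
  fixes \<nu> :: "'o::wellorder"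
  assumes below: "reduces_below A B C D \<nu>"
    and W: "open W" "closed W" and y: "y \<in> pair_deriv C D \<nu>" and V: "open V" "y \<in> V"
    and yA: "pair_deriv A B \<nu> \<inter> W \<inter> A \<noteq> {} \<Longrightarrow> y \<in> C"
    and yB: "pair_deriv A B \<nu> \<inter> W \<inter> B \<noteq> {} \<Longrightarrow> y \<in> D"
  shows "reduces_within W V A B C D"
proof -
  define K where "K = pair_deriv A B \<nu> \<inter> W"
  have "closed K"
    using closed_opt_deriv W(2) by (auto simp: K_def)
  have "reduces_within (layer W K n) (V \<inter> cylinder n y) A B C D" for n
  proof -
    have "pair_deriv A B \<nu> \<inter> layer W K n = {}"
      using layer_subset[of W K n] by (auto simp: K_def)
    moreover have "y \<in> V \<inter> cylinder n y"
      using V(2) by simp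
    ultimately show ?thesis
      using reduces_belowD[OF below open_layer[OF W(1)] closed_layer[OF W(2)] _ y
          open_Int[OF V(1) open_cylinder]]
      by blast
  qed
  then obtain h where h: "\<And>n. continuous_on (layer W K n) (h n)"
      "\<And>n. h n ` layer W K n \<subseteq> V \<inter> cylinder n y"
      "\<And>n x. x \<in> layer W K n \<inter> A \<Longrightarrow> h n x \<in> C" "\<And>n x. x \<in> layer W K n \<inter> B \<Longrightarrow> h n x \<in> D"
    unfolding reduces_within_def by metis
  define k where "k x = (if x \<in> K then y else h (LEAST n. x \<in> layer W K n) x)" for x
  have "continuous_on W k"
    unfolding k_def using h(1,2) by (intro continuous_on_collapse \<open>closed K\<close> W(1)) auto
  moreover have "k x \<in> V \<and> (x \<in> A \<longrightarrow> k x \<in> C) \<and> (x \<in> B \<longrightarrow> k x \<in> D)" if "x \<in> W" for x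
  proof (cases "x \<in> K")
    case True
    then show ?thesis
      using V(2) yA yB by (auto simp: k_def K_def)
  next
    case False
    then obtain n where n: "x \<in> layer W K n"
      using exists_layer[OF \<open>closed K\<close> \<open>x \<in> W\<close>] by blast
    then have "k x = h n x"
      using False Least_layer by (simp add: k_def)
    moreover have "h n x \<in> V"
      using h(2)[of n] n by blast
    ultimately show ?thesis
      using h(3,4)[of x n] n by simp
  qed
  ultimately show ?thesis
    unfolding reduces_within_def by blast
qed

lemma uniform_one_sided_cylinders:
  assumes "closed P" "closed W" and thin: "pair_step A B P \<inter> W = {}"
  shows "\<exists>n. \<forall>z\<in>P \<inter> W. P \<inter> cylinder n z \<inter> A = {} \<or> P \<inter> cylinder n z \<inter> B = {}"
proof -
  define one_sided where "one_sided c \<longleftrightarrow> P \<inter> c \<inter> A = {} \<or> P \<inter> c \<inter> B = {}" for c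
  have "compact (P \<inter> W)"
    using assms(1,2) compact_Int_closed[OF compact_UNIV_cantor] by (simp add: closed_Int)
  moreover have "\<exists>m. one_sided (cylinder m x)" if "x \<in> P \<inter> W" for x
  proof -
    have "x \<notin> pair_step A B P" "x \<in> P"
      using thin that by auto
    then obtain U where U: "open U" "x \<in> U" "one_sided U"
      unfolding mem_pair_step_iff one_sided_def by blast
    then obtain m where "cylinder m x \<subseteq> U"
      using open_imp_cylinder_subset by blast
    then show ?thesis
      using U(3) unfolding one_sided_def by blast
  qed
  moreover have "one_sided c'" if "one_sided c" "c' \<subseteq> c" for c c'
    using that unfolding one_sided_def by blast
  ultimately show ?thesis
    unfolding one_sided_def by (rule compact_uniform_cylinder)
qed

text \<open>If the stage is locally one-sided inside W, finitely many cylinders of one length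
  cover it, each one-sided; each is handled by collapsing onto a point of C or of D, and the
  rest of W avoids the stage.\<close>
lemma reduces_within_glue:
  fixes \<nu> :: "'o::wellorder"
  assumes below: "reduces_below A B C D \<nu>"
    and W: "open W" "closed W" and top: "pair_step A B (pair_deriv A B \<nu>) \<inter> W = {}"
    and yC: "y\<^sub>C \<in> pair_deriv C D \<nu>" "y\<^sub>C \<in> C" "y\<^sub>C \<in> V"
    and yD: "y\<^sub>D \<in> pair_deriv C D \<nu>" "y\<^sub>D \<in> D" "y\<^sub>D \<in> V"
    and V: "open V"
  shows "reduces_within W V A B C D"
proof -
  define P where "P = pair_deriv A B \<nu>"
  define K where "K = P \<inter> W"
  obtain n where n: "\<And>z. z \<in> K \<Longrightarrow> P \<inter> cylinder n z \<inter> A = {} \<or> P \<inter> cylinder n z \<inter> B = {}"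
    using uniform_one_sided_cylinders[OF closed_opt_deriv W(2) top] unfolding K_def P_def by blast
  define R where "R = W - cylinder_nbhd K n"
  have pieces: "open c \<and> reduces_within c V A B C D" if c: "c \<in> insert R (cylinder n ` K)" for c
  proof -
    consider "c = R" | z where "z \<in> K" "c = cylinder n z"
      using c by blast
    then show ?thesis
    proof cases
      case 1
      have "P \<inter> R = {}"
        using subset_cylinder_nbhd[of K n] by (auto simp: R_def K_def)
      moreover have "open R" "closed R"
        using W open_cylinder_nbhd closed_cylinder_nbhd by (auto simp: R_def)
      ultimately show ?thesis
        unfolding 1 P_def using reduces_belowD[OF below _ _ _ yC(1) V yC(3)] by blast
    next
      case (2 z)
      have oc: "open c" "closed c"
        using open_cylinder closed_cylinder by (simp_all add: 2)
      have "reduces_within c V A B C D"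
      proof (cases "P \<inter> c \<inter> A = {}")
        case True
        then show ?thesis
          using reduces_within_collapse[OF below oc yD(1) V yD(3)] yD(2) by (simp add: P_def)
      next
        case False
        then have "P \<inter> c \<inter> B = {}"
          using n[OF \<open>z \<in> K\<close>] by (simp add: 2)
        then show ?thesis
          using reduces_within_collapse[OF below oc yC(1) V yC(3)] yC(2) by (simp add: P_def)
      qed
      with oc show ?thesis by blast
    qed
  qed
  have "pairwise disjnt (cylinder n ` K)"
    by (auto simp: pairwise_def disjnt_def dest: cylinder_eq)
  moreover have "disjnt R (cylinder n z)" if "z \<in> K" for z
    using that by (auto simp: R_def disjnt_def cylinder_nbhd_def)
  ultimately have disjoint: "pairwise disjnt (insert R (cylinder n ` K))"
    by (auto simp: pairwise_insert disjnt_sym)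
  have cover: "W \<subseteq> \<Union>(insert R (cylinder n ` K))"
    by (auto simp: R_def cylinder_nbhd_def)
  show ?thesis
    by (rule reduces_within_disjoint_Union[OF pieces[THEN conjunct1] disjoint cover
          pieces[THEN conjunct2]])
qed

lemma reduces_below_all:
  fixes \<nu> :: "'o::wellorder"
  shows "reduces_below A B C D \<nu>"
proof (induction \<nu> rule: less_induct)
  case (less \<nu>)
  show ?case
    unfolding reduces_below_def
  proof (intro allI impI)
    fix W y V
    assume W: "open W" "closed W" and avoid: "pair_deriv A B \<nu> \<inter> W = {}"
      and y: "y \<in> pair_deriv C D \<nu>" and V: "open V" "y \<in> V"
    consider (succ) \<eta> where "is_succ_of \<eta> \<nu>" | (bot) "\<not> (\<exists>\<mu>. \<mu> < \<nu>)"
      | (limit) \<mu>\<^sub>0 where "\<not> (\<exists>\<eta>. is_succ_of \<eta> \<nu>)" "\<mu>\<^sub>0 < \<nu>"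
      by blast
    then show "reduces_within W V A B C D"
    proof cases
      case succ
      then have "\<eta> < \<nu>"
        by (simp add: is_succ_of_def)
      have "y \<in> pair_step C D (pair_deriv C D \<eta>)"
        using y opt_deriv_succ[OF succ] by simp
      then obtain y\<^sub>C y\<^sub>D where "y\<^sub>C \<in> pair_deriv C D \<eta>" "y\<^sub>C \<in> C" "y\<^sub>C \<in> V"
        and "y\<^sub>D \<in> pair_deriv C D \<eta>" "y\<^sub>D \<in> D" "y\<^sub>D \<in> V"
        using V unfolding mem_pair_step_iff by blast
      moreover have "pair_step A B (pair_deriv A B \<eta>) \<inter> W = {}"
        using avoid opt_deriv_succ[OF succ] by simp
      ultimately show ?thesis
        using reduces_within_glue[OF less.IH[OF \<open>\<eta> < \<nu>\<close>] W] V(1) by blast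
    next
      case bot
      then have "W = {}"
        using avoid by (simp add: opt_deriv_bot)
      then show ?thesis
        by (simp add: reduces_within_empty)
    next
      case limit
      then obtain \<mu> where "\<mu> < \<nu>" "pair_deriv A B \<mu> \<inter> W = {}"
        using opt_deriv_limit_disjoint W(2) avoid by blast
      moreover have "y \<in> pair_deriv C D \<mu>"
        using y opt_deriv_antimono[OF less_imp_le[OF \<open>\<mu> < \<nu>\<close>]] by blast
      ultimately show ?thesis
        using less.IH W V by (blast intro: reduces_belowD)
    qed
  qed
qed

lemma reduces_of_pair_deriv_empty:
  fixes \<nu> :: "'o::wellorder"
  assumes "pair_deriv A B \<nu> = {}" "pair_deriv C D \<nu> \<noteq> {}"
  shows "reduces A B C D"
proof -
  obtain y where "y \<in> pair_deriv C D \<nu>"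
    using assms(2) by blast
  then show ?thesis
    using reduces_belowD[OF reduces_below_all open_UNIV closed_UNIV _ _ open_UNIV UNIV_I] assms(1)
    by simp
qed

lemma reduces_by_collapse:
  fixes \<nu> :: "'o::wellorder"
  assumes "y \<in> pair_deriv C D \<nu>"
    and "pair_deriv A B \<nu> \<inter> A \<noteq> {} \<Longrightarrow> y \<in> C" and "pair_deriv A B \<nu> \<inter> B \<noteq> {} \<Longrightarrow> y \<in> D"
  shows "reduces A B C D"
  using assms by (intro reduces_within_collapse[OF reduces_below_all]) auto

lemma reduces_by_glue:
  fixes \<nu> :: "'o::wellorder"
  assumes "pair_step A B (pair_deriv A B \<nu>) = {}"
    and "y\<^sub>C \<in> pair_deriv C D \<nu>" "y\<^sub>C \<in> C" and "y\<^sub>D \<in> pair_deriv C D \<nu>" "y\<^sub>D \<in> D"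
  shows "reduces A B C D"
  using assms by (intro reduces_within_glue[OF reduces_below_all]) auto

section \<open>Baire class one functions\<close>

text \<open>A pointwise limit of continuous functions cannot have both of two separated level sets
  dense in a nonempty closed set: by Baire's theorem one of the closed sets where the
  approximations eventually stay below c, or eventually stay above m, has interior in it.\<close>
lemma baire1_locally_one_sided:
  assumes "baire1 f" "closed P" "P \<noteq> {}" "b < a"
  shows "\<exists>U. open U \<and> P \<inter> U \<noteq> {} \<and> (P \<inter> U \<inter> {x. a \<le> f x} = {} \<or> P \<inter> U \<inter> {x. f x \<le> b} = {})"
proof -
  obtain fn where cont: "\<And>n. continuous_on UNIV (fn n)" and lim: "\<And>x. (\<lambda>n. fn n x) \<longlonglongrightarrow> f x"
    using assms(1) unfolding baire1_def by blast
  define m where "m = (a + b) / 2"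
  define c where "c = (m + a) / 2"
  have "b < m" "m < c" "c < a"
    using \<open>b < a\<close> by (simp_all add: m_def c_def field_simps)
  define L where "L N = (\<Inter>n\<in>{N..}. {x. fn n x \<le> c})" for N
  define R where "R N = (\<Inter>n\<in>{N..}. {x. m \<le> fn n x})" for N
  have "closed (L N)" "closed (R N)" for N
    unfolding L_def R_def by (intro closed_INT ballI closed_Collect_le continuous_on_const cont)+
  then have closed: "closed T" if "T \<in> range L \<union> range R" for T
    using that by blast
  have cover: "P \<subseteq> \<Union>(range L \<union> range R)"
  proof
    fix x
    show "x \<in> \<Union>(range L \<union> range R)"
    proof (cases "f x < c")
      case True
      then have "\<forall>\<^sub>F n in sequentially. fn n x < c"
        by (rule order_tendstoD(2)[OF lim])
      then obtain N where "\<forall>n\<ge>N. fn n x < c"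
        by (auto simp: eventually_sequentially)
      then have "x \<in> L N"
        by (auto simp: L_def less_imp_le)
      then show ?thesis by blast
    next
      case False
      then have "m < f x"
        using \<open>m < c\<close> by simp
      then have "\<forall>\<^sub>F n in sequentially. m < fn n x"
        by (rule order_tendstoD(1)[OF lim])
      then obtain N where "\<forall>n\<ge>N. m < fn n x"
        by (auto simp: eventually_sequentially)
      then have "x \<in> R N"
        by (auto simp: R_def less_imp_le)
      then show ?thesis by blast
    qed
  qed
  obtain T U where T: "T \<in> range L \<union> range R" and U: "open U" "P \<inter> U \<noteq> {}" "P \<inter> U \<subseteq> T"
    using baire_cantor[OF assms(2,3) closed cover] by auto
  have L_disjoint: "L N \<inter> {x. a \<le> f x} = {}" for N
  proof -
    have "f x \<le> c" if "x \<in> L N" for x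
      using that by (intro LIMSEQ_le_const2[OF lim]) (auto simp: L_def)
    then show ?thesis
      using \<open>c < a\<close> by fastforce
  qed
  have R_disjoint: "R N \<inter> {x. f x \<le> b} = {}" for N
  proof -
    have "m \<le> f x" if "x \<in> R N" for x
      using that by (intro LIMSEQ_le_const[OF lim]) (auto simp: R_def)
    then show ?thesis
      using \<open>b < m\<close> by fastforce
  qed
  obtain N where "T = L N \<or> T = R N"
    using T by blast
  then have "P \<inter> U \<inter> {x. a \<le> f x} = {} \<or> P \<inter> U \<inter> {x. f x \<le> b} = {}"
    using U(3) L_disjoint[of N] R_disjoint[of N] by blast
  then show ?thesis
    using U(1,2) by blast
qed

definition upper_part :: "(cantor \<Rightarrow> real) \<Rightarrow> rat \<Rightarrow> rat \<Rightarrow> cantor set" where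
  "upper_part f p \<epsilon> = {x. of_rat p + of_rat \<epsilon> \<le> f x}"

definition lower_part :: "(cantor \<Rightarrow> real) \<Rightarrow> rat \<Rightarrow> rat \<Rightarrow> cantor set" where
  "lower_part f p \<epsilon> = {x. f x \<le> of_rat p - of_rat \<epsilon>}"

lemma Pseq_eq_pair_deriv: "Pseq f p \<epsilon> = pair_deriv (upper_part f p \<epsilon>) (lower_part f p \<epsilon>)"
proof -
  have "bfam f p \<epsilon> = {- upper_part f p \<epsilon>, - lower_part f p \<epsilon>}"
    unfolding bfam_def upper_part_def lower_part_def by (auto simp: not_le)
  then show ?thesis
    unfolding Pseq_def by simp
qed

lemma correct_answers_iff:
  "(\<forall>A b. correct_answer b (g (k A)) q \<delta> \<longrightarrow> correct_answer b (f A) p \<epsilon>) \<longleftrightarrow>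
     k ` upper_part f p \<epsilon> \<subseteq> upper_part g q \<delta> \<and> k ` lower_part f p \<epsilon> \<subseteq> lower_part g q \<delta>"
proof -
  have "(\<forall>A b. correct_answer b (g (k A)) q \<delta> \<longrightarrow> correct_answer b (f A) p \<epsilon>) \<longleftrightarrow>
     (\<forall>A. (g (k A) < of_rat q + of_rat \<delta> \<longrightarrow> f A < of_rat p + of_rat \<epsilon>) \<and>
          (g (k A) > of_rat q - of_rat \<delta> \<longrightarrow> f A > of_rat p - of_rat \<epsilon>))"
    unfolding correct_answer_def by (metis (full_types))
  also have "\<dots> \<longleftrightarrow> k ` upper_part f p \<epsilon> \<subseteq> upper_part g q \<delta> \<and> k ` lower_part f p \<epsilon> \<subseteq> lower_part g q \<delta>"
    unfolding upper_part_def lower_part_def by (auto simp: not_less[symmetric])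
  finally show ?thesis .
qed

lemma m_reducible_iff_reduces:
  "m_reducible f g \<longleftrightarrow> (\<forall>p \<epsilon>. \<epsilon> > 0 \<longrightarrow> (\<exists>q \<delta>. \<delta> > 0 \<and>
     reduces (upper_part f p \<epsilon>) (lower_part f p \<epsilon>) (upper_part g q \<delta>) (lower_part g q \<delta>)))"
  unfolding m_reducible_def reduces_within_def correct_answers_iff by (auto simp: image_subset_iff)

lemma Pseq_locally_one_sided:
  assumes "baire1 f" "\<epsilon> > 0" "closed P" "P \<noteq> {}"
  shows "\<exists>U. open U \<and> P \<inter> U \<noteq> {} \<and> (P \<inter> U \<inter> upper_part f p \<epsilon> = {} \<or> P \<inter> U \<inter> lower_part f p \<epsilon> = {})"
  using baire1_locally_one_sided[OF assms(1,3,4), of "of_rat p - of_rat \<epsilon>" "of_rat p + of_rat \<epsilon>"] assms(2)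
  unfolding upper_part_def lower_part_def by simp

lemma brank_le: "(\<And>p \<epsilon>. \<epsilon> > 0 \<Longrightarrow> (alpha f p \<epsilon> :: 'o::wellorder) \<le> \<nu>) \<Longrightarrow> brank f \<le> \<nu>"
  unfolding brank_def by (intro Least_le) blast

definition stage_meets_upper :: "(cantor \<Rightarrow> real) \<Rightarrow> 'o::wellorder \<Rightarrow> bool" where
  "stage_meets_upper h \<nu> \<longleftrightarrow> (\<exists>p \<epsilon>. \<epsilon> > 0 \<and> Pseq h p \<epsilon> \<nu> \<inter> upper_part h p \<epsilon> \<noteq> {})"

definition stage_meets_lower :: "(cantor \<Rightarrow> real) \<Rightarrow> 'o::wellorder \<Rightarrow> bool" where
  "stage_meets_lower h \<nu> \<longleftrightarrow> (\<exists>p \<epsilon>. \<epsilon> > 0 \<and> Pseq h p \<epsilon> \<nu> \<inter> lower_part h p \<epsilon> \<noteq> {})"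

definition stage_meets_both :: "(cantor \<Rightarrow> real) \<Rightarrow> 'o::wellorder \<Rightarrow> bool" where
  "stage_meets_both h \<nu> \<longleftrightarrow> (\<exists>p \<epsilon>. \<epsilon> > 0 \<and>
     Pseq h p \<epsilon> \<nu> \<inter> upper_part h p \<epsilon> \<noteq> {} \<and> Pseq h p \<epsilon> \<nu> \<inter> lower_part h p \<epsilon> \<noteq> {})"

lemma stage_meets_of_m_reducible:
  fixes \<nu> :: "'o::wellorder"
  assumes "m_reducible f g"
  shows "stage_meets_upper f \<nu> \<Longrightarrow> stage_meets_upper g \<nu>"
    and "stage_meets_lower f \<nu> \<Longrightarrow> stage_meets_lower g \<nu>"
    and "stage_meets_both f \<nu> \<Longrightarrow> stage_meets_both g \<nu>"
proof -
  have "\<exists>q \<delta>. \<delta> > 0 \<and>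
      (Pseq f p \<epsilon> \<nu> \<inter> upper_part f p \<epsilon> \<noteq> {} \<longrightarrow> Pseq g q \<delta> \<nu> \<inter> upper_part g q \<delta> \<noteq> {}) \<and>
      (Pseq f p \<epsilon> \<nu> \<inter> lower_part f p \<epsilon> \<noteq> {} \<longrightarrow> Pseq g q \<delta> \<nu> \<inter> lower_part g q \<delta> \<noteq> {})"
    if "\<epsilon> > 0" for p \<epsilon>
    using assms that reduces_pair_deriv_meets[where \<nu> = \<nu>]
    unfolding m_reducible_iff_reduces Pseq_eq_pair_deriv by metis
  then show "stage_meets_upper f \<nu> \<Longrightarrow> stage_meets_upper g \<nu>"
    and "stage_meets_lower f \<nu> \<Longrightarrow> stage_meets_lower g \<nu>"
    and "stage_meets_both f \<nu> \<Longrightarrow> stage_meets_both g \<nu>"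
    unfolding stage_meets_upper_def stage_meets_lower_def stage_meets_both_def by meson+
qed

lemma image_outside_interval_iff:
  "h ` P - {of_rat p - of_rat \<epsilon> <..< of_rat p + of_rat \<epsilon>} \<noteq> {} \<longleftrightarrow>
     P \<inter> (upper_part h p \<epsilon> \<union> lower_part h p \<epsilon>) \<noteq> {}"
  unfolding upper_part_def lower_part_def by (auto simp: not_less)

lemma image_subset_lessThan_iff:
  "h ` P \<subseteq> {..< of_rat p + of_rat \<epsilon>} \<longleftrightarrow> P \<inter> upper_part h p \<epsilon> = {}"
  unfolding upper_part_def by (auto simp: not_less)

lemma image_subset_greaterThan_iff:
  "h ` P \<subseteq> {of_rat p - of_rat \<epsilon> <..} \<longleftrightarrow> P \<inter> lower_part h p \<epsilon> = {}"
  unfolding lower_part_def by (auto simp: not_less)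

section \<open>Ranks\<close>

locale uncountable_wellorder =
  fixes type :: "'o::wellorder itself"
  assumes uncountable_UNIV: "uncountable (UNIV :: 'o set)"
begin

lemma countable_Pseq_nonempty:
  assumes "baire1 f" "\<epsilon> > 0"
  shows "countable {\<nu>::'o. Pseq f p \<epsilon> \<nu> \<noteq> {}}"
  unfolding Pseq_eq_pair_deriv by (intro countable_pair_deriv_nonempty Pseq_locally_one_sided[OF assms])

lemma Pseq_alpha:
  assumes "baire1 f" "\<epsilon> > 0"
  shows "Pseq f p \<epsilon> (alpha f p \<epsilon> :: 'o) = {}"
proof -
  have "\<exists>\<nu>::'o. Pseq f p \<epsilon> \<nu> = {}"
  proof (rule ccontr)
    assume "\<not> ?thesis"
    then have "{\<nu>::'o. Pseq f p \<epsilon> \<nu> \<noteq> {}} = UNIV"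
      by auto
    then show False
      using countable_Pseq_nonempty[OF assms, of p] uncountable_UNIV by simp
  qed
  then show ?thesis
    unfolding alpha_def by (rule LeastI_ex)
qed

lemma less_alpha_iff:
  assumes "baire1 f" "\<epsilon> > 0"
  shows "\<nu> < (alpha f p \<epsilon> :: 'o) \<longleftrightarrow> Pseq f p \<epsilon> \<nu> \<noteq> {}"
proof
  show "\<nu> < alpha f p \<epsilon> \<Longrightarrow> Pseq f p \<epsilon> \<nu> \<noteq> {}"
    unfolding alpha_def by (rule not_less_Least)
  show "Pseq f p \<epsilon> \<nu> \<noteq> {} \<Longrightarrow> \<nu> < alpha f p \<epsilon>"
    using Pseq_alpha[OF assms, of p] opt_deriv_antimono[of "alpha f p \<epsilon>" \<nu> "bfam f p \<epsilon>"]
    unfolding Pseq_def by (metis not_less subset_empty)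
qed

lemma alpha_is_succ:
  assumes "baire1 f" "\<epsilon> > 0"
  shows "\<exists>\<mu>. is_succ_of \<mu> (alpha f p \<epsilon> :: 'o)"
proof (rule ccontr)
  assume nonsucc: "\<not> ?thesis"
  have empty: "opt_deriv (bfam f p \<epsilon>) (alpha f p \<epsilon> :: 'o) \<inter> UNIV = {}"
    using Pseq_alpha[OF assms] by (simp add: Pseq_def)
  show False
  proof (cases "\<exists>\<mu>. \<mu> < (alpha f p \<epsilon> :: 'o)")
    case True
    then obtain \<mu>\<^sub>0 where "\<mu>\<^sub>0 < (alpha f p \<epsilon> :: 'o)" ..
    then obtain \<mu> where "\<mu> < (alpha f p \<epsilon> :: 'o)" "Pseq f p \<epsilon> \<mu> = {}"
      using opt_deriv_limit_disjoint[OF nonsucc _ closed_UNIV empty] by (auto simp: Pseq_def)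
    then show False
      using less_alpha_iff[OF assms] by blast
  next
    case False
    then show False
      using empty opt_deriv_bot[of "alpha f p \<epsilon> :: 'o" "bfam f p \<epsilon>"] by simp
  qed
qed

lemma alpha_le_brank:
  assumes "baire1 f" "\<epsilon> > 0"
  shows "(alpha f p \<epsilon> :: 'o) \<le> brank f"
proof -
  define S where "S = (\<Union>(p, \<epsilon>)\<in>{(p, \<epsilon>). \<epsilon> > (0::rat)}. {\<nu>::'o. \<nu> < alpha f p \<epsilon>})"
  have "countable S"
    unfolding S_def using less_alpha_iff[OF assms(1)] countable_Pseq_nonempty[OF assms(1)]
    by (intro countable_UN) auto
  then obtain b where "b \<notin> S"
    using uncountable_UNIV by (metis UNIV_eq_I countable_def)
  then have "\<exists>b::'o. \<forall>p \<epsilon>. \<epsilon> > 0 \<longrightarrow> alpha f p \<epsilon> \<le> b"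
    unfolding S_def by (auto simp: not_less intro!: exI[of _ b]) (meson not_less)
  then have "\<forall>p \<epsilon>. \<epsilon> > 0 \<longrightarrow> (alpha f p \<epsilon> :: 'o) \<le> brank f"
    unfolding brank_def by (rule LeastI_ex)
  then show ?thesis
    using assms(2) by blast
qed

lemma ex_less_brank:
  assumes "baire1 f"
  shows "\<exists>\<mu>. \<mu> < (brank f :: 'o)"
  using alpha_is_succ[OF assms, of 1 0] alpha_le_brank[OF assms, of 1 0]
  by (auto simp: is_succ_of_def intro: less_le_trans)

lemma alpha_eq_brank_iff:
  assumes "baire1 h" "\<epsilon> > 0" and \<nu>: "is_succ_of \<nu> (brank h :: 'o)"
  shows "(alpha h p \<epsilon> :: 'o) = brank h \<longleftrightarrow> Pseq h p \<epsilon> \<nu> \<noteq> {}"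
  using less_alpha_iff[OF assms(1,2)] alpha_le_brank[OF assms(1,2), of p] \<nu>
  unfolding is_succ_of_def by (metis le_less not_less)

lemma Pseq_stage_nonempty:
  assumes "baire1 h" and \<nu>: "is_succ_of \<nu> (brank h :: 'o)"
  obtains q \<delta> where "\<delta> > 0" "Pseq h q \<delta> \<nu> \<noteq> {}"
proof -
  have "\<not> brank h \<le> \<nu>"
    using \<nu> unfolding is_succ_of_def by (simp add: not_le)
  then have "\<not> (\<forall>q \<delta>. \<delta> > 0 \<longrightarrow> (alpha h q \<delta> :: 'o) \<le> \<nu>)"
    using brank_le by blast
  then show thesis
    using that less_alpha_iff[OF assms(1)] by (meson not_less)
qed

lemma maximal_pair_iff:
  assumes "baire1 h" and \<nu>: "is_succ_of \<nu> (brank h :: 'o)"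
  shows "maximal_pair h (\<nu>'::'o) p \<epsilon> \<longleftrightarrow>
     \<nu>' = \<nu> \<and> \<epsilon> > 0 \<and> Pseq h p \<epsilon> \<nu> \<inter> (upper_part h p \<epsilon> \<union> lower_part h p \<epsilon>) \<noteq> {}"
  using alpha_eq_brank_iff[OF assms(1) _ \<nu>] is_succ_of_unique[OF _ \<nu>] \<nu>
  unfolding maximal_pair_def image_outside_interval_iff by blast

lemma two_sided_iff:
  assumes "baire1 h" "is_succ_of \<nu> (brank h :: 'o)"
  shows "two_sided TYPE('o) h \<longleftrightarrow> stage_meets_both h \<nu>"
  unfolding two_sided_def maximal_pair_iff[OF assms] stage_meets_both_def
    image_subset_lessThan_iff image_subset_greaterThan_iff
  by blast

lemma left_sided_iff:
  assumes "baire1 h" "is_succ_of \<nu> (brank h :: 'o)"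
  shows "left_sided TYPE('o) h \<longleftrightarrow> \<not> stage_meets_upper h \<nu>"
  unfolding left_sided_def maximal_pair_iff[OF assms] stage_meets_upper_def image_subset_lessThan_iff
  by blast

lemma right_sided_iff:
  assumes "baire1 h" "is_succ_of \<nu> (brank h :: 'o)"
  shows "right_sided TYPE('o) h \<longleftrightarrow> \<not> stage_meets_lower h \<nu>"
  unfolding right_sided_def maximal_pair_iff[OF assms] stage_meets_lower_def image_subset_greaterThan_iff
  by blast

end

section \<open>Reductions between Baire class one functions\<close>

context uncountable_wellorder
begin

text \<open>A point of the last stage strictly inside (p - eps, p + eps) lies, for a narrower pair
  with the same lower bound and upper bound just below its value, in the upper part.\<close>
lemma stage_meets_upper_or_lower:
  assumes "baire1 h" and \<nu>: "is_succ_of \<nu> (brank h :: 'o)"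
  shows "stage_meets_upper h \<nu> \<or> stage_meets_lower h \<nu>"
proof -
  obtain q \<delta> y where qd: "\<delta> > 0" and y: "y \<in> Pseq h q \<delta> \<nu>"
    using Pseq_stage_nonempty[OF assms] by blast
  show ?thesis
  proof (cases "y \<in> upper_part h q \<delta> \<union> lower_part h q \<delta>")
    case True
    then show ?thesis
      using qd y unfolding stage_meets_upper_def stage_meets_lower_def by blast
  next
    case False
    then have lo: "of_rat (q - \<delta>) < h y" and hi: "h y < of_rat q + of_rat \<delta>"
      by (auto simp: upper_part_def lower_part_def of_rat_diff)
    obtain r where r: "of_rat (q - \<delta>) < (of_rat r :: real)" "of_rat r < h y"
      using of_rat_dense[OF lo] by blast
    define q' where "q' = (r + (q - \<delta>)) / 2"
    define \<delta>' where "\<delta>' = (r - (q - \<delta>)) / 2"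
    have "\<delta>' > 0"
      using r(1) by (simp add: \<delta>'_def of_rat_less)
    have up: "of_rat q' + of_rat \<delta>' = (of_rat r :: real)" and low: "of_rat q' - of_rat \<delta>' = (of_rat (q - \<delta>) :: real)"
      unfolding q'_def \<delta>'_def by (simp_all add: of_rat_add[symmetric] of_rat_diff[symmetric] field_simps)
    have wider: "upper_part h q \<delta> \<subseteq> upper_part h q' \<delta>'" "lower_part h q \<delta> \<subseteq> lower_part h q' \<delta>'"
      using r hi up low by (auto simp: upper_part_def lower_part_def of_rat_diff)
    have "y \<in> Pseq h q' \<delta>' \<nu>"
      using y pair_deriv_mono[OF wider, of \<nu>] unfolding Pseq_eq_pair_deriv by blast
    moreover have "y \<in> upper_part h q' \<delta>'"
      using r(2) up by (simp add: upper_part_def)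
    ultimately show ?thesis
      using \<open>\<delta>' > 0\<close> unfolding stage_meets_upper_def by blast
  qed
qed

lemma reduces_below_brank:
  assumes f: "baire1 f" and g: "baire1 g" and "\<epsilon> > 0" and less: "(alpha f p \<epsilon> :: 'o) < brank g"
  shows "\<exists>q \<delta>. \<delta> > 0 \<and> reduces (upper_part f p \<epsilon>) (lower_part f p \<epsilon>) (upper_part g q \<delta>) (lower_part g q \<delta>)"
proof -
  obtain q \<delta> where "\<delta> > 0" "\<not> (alpha g q \<delta> :: 'o) \<le> alpha f p \<epsilon>"
    using brank_le[of g "alpha f p \<epsilon>"] less by (meson not_less)
  then have "Pseq g q \<delta> (alpha f p \<epsilon> :: 'o) \<noteq> {}"
    using less_alpha_iff[OF g] by (simp add: not_le)
  moreover have "Pseq f p \<epsilon> (alpha f p \<epsilon> :: 'o) = {}"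
    using Pseq_alpha[OF f \<open>\<epsilon> > 0\<close>] .
  ultimately show ?thesis
    using \<open>\<delta> > 0\<close> reduces_of_pair_deriv_empty by (metis Pseq_eq_pair_deriv)
qed

lemma m_reducible_of_brank_less:
  assumes f: "baire1 f" and g: "baire1 g" and "(brank f :: 'o) < brank g"
  shows "m_reducible f g"
  unfolding m_reducible_iff_reduces
  using reduces_below_brank[OF f g] alpha_le_brank[OF f] assms(3) by (meson le_less_trans)

lemma m_reducible_of_limit:
  assumes f: "baire1 f" and g: "baire1 g" and "is_limit (brank f :: 'o)" "(brank f :: 'o) = brank g"
  shows "m_reducible f g"
  unfolding m_reducible_iff_reduces
proof (intro allI impI)
  fix p \<epsilon> :: rat
  assume "\<epsilon> > 0"
  then have "(alpha f p \<epsilon> :: 'o) \<noteq> brank f"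
    using alpha_is_succ[OF f, of \<epsilon> p] assms(3) unfolding is_limit_def by metis
  then have "(alpha f p \<epsilon> :: 'o) < brank g"
    using alpha_le_brank[OF f \<open>\<epsilon> > 0\<close>, of p] assms(4) by simp
  then show "\<exists>q \<delta>. \<delta> > 0 \<and>
      reduces (upper_part f p \<epsilon>) (lower_part f p \<epsilon>) (upper_part g q \<delta>) (lower_part g q \<delta>)"
    by (rule reduces_below_brank[OF f g \<open>\<epsilon> > 0\<close>])
qed

text \<open>At the last stage of a pair of maximal rank: points of the stage in both parts require
  gluing, points in one part only allow collapsing onto a point of g's stage in the matching
  part, and an empty intersection with both parts allows collapsing onto any point.\<close>
lemma reduces_at_last_stage:
  assumes f: "baire1 f" and g: "baire1 g" and "\<epsilon> > 0"
    and \<nu>f: "is_succ_of \<nu> (alpha f p \<epsilon> :: 'o)" and \<nu>g: "is_succ_of \<nu> (brank g :: 'o)"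
    and upper: "Pseq f p \<epsilon> \<nu> \<inter> upper_part f p \<epsilon> \<noteq> {} \<Longrightarrow> stage_meets_upper g \<nu>"
    and lower: "Pseq f p \<epsilon> \<nu> \<inter> lower_part f p \<epsilon> \<noteq> {} \<Longrightarrow> stage_meets_lower g \<nu>"
    and both: "Pseq f p \<epsilon> \<nu> \<inter> upper_part f p \<epsilon> \<noteq> {} \<Longrightarrow> Pseq f p \<epsilon> \<nu> \<inter> lower_part f p \<epsilon> \<noteq> {} \<Longrightarrow>
      stage_meets_both g \<nu>"
  shows "\<exists>q \<delta>. \<delta> > 0 \<and> reduces (upper_part f p \<epsilon>) (lower_part f p \<epsilon>) (upper_part g q \<delta>) (lower_part g q \<delta>)"
proof -
  define P where "P = Pseq f p \<epsilon> \<nu>"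
  have last: "pair_step (upper_part f p \<epsilon>) (lower_part f p \<epsilon>) (P :: cantor set) = {}"
    using Pseq_alpha[OF f \<open>\<epsilon> > 0\<close>, of p] opt_deriv_succ[OF \<nu>f]
    by (simp add: P_def Pseq_eq_pair_deriv)
  consider "P \<inter> upper_part f p \<epsilon> \<noteq> {}" "P \<inter> lower_part f p \<epsilon> \<noteq> {}"
    | "P \<inter> lower_part f p \<epsilon> = {}" | "P \<inter> upper_part f p \<epsilon> = {}"
    by blast
  then show ?thesis
  proof cases
    case 1
    then obtain q \<delta> y\<^sub>C y\<^sub>D where "\<delta> > 0"
      "y\<^sub>C \<in> Pseq g q \<delta> \<nu>" "y\<^sub>C \<in> upper_part g q \<delta>" "y\<^sub>D \<in> Pseq g q \<delta> \<nu>" "y\<^sub>D \<in> lower_part g q \<delta>"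
      using both unfolding P_def stage_meets_both_def by blast
    then show ?thesis
      using reduces_by_glue[OF last[unfolded P_def Pseq_eq_pair_deriv]]
      by (metis Pseq_eq_pair_deriv)
  next
    case 2
    obtain q \<delta> y where "\<delta> > 0" "y \<in> Pseq g q \<delta> \<nu>"
      and "P \<inter> upper_part f p \<epsilon> \<noteq> {} \<Longrightarrow> y \<in> upper_part g q \<delta>"
    proof (cases "P \<inter> upper_part f p \<epsilon> = {}")
      case True
      then show thesis
        using Pseq_stage_nonempty[OF g \<nu>g] that by blast
    next
      case False
      then show thesis
        using upper that unfolding P_def stage_meets_upper_def by blast
    qed
    then show ?thesis
      using 2 reduces_by_collapse[of y "upper_part g _ _" "lower_part g _ _" \<nu>]
      unfolding P_def Pseq_eq_pair_deriv by blast
  next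
    case 3
    obtain q \<delta> y where "\<delta> > 0" "y \<in> Pseq g q \<delta> \<nu>"
      and "P \<inter> lower_part f p \<epsilon> \<noteq> {} \<Longrightarrow> y \<in> lower_part g q \<delta>"
    proof (cases "P \<inter> lower_part f p \<epsilon> = {}")
      case True
      then show thesis
        using Pseq_stage_nonempty[OF g \<nu>g] that by blast
    next
      case False
      then show thesis
        using lower that unfolding P_def stage_meets_lower_def by blast
    qed
    then show ?thesis
      using 3 reduces_by_collapse[of y "upper_part g _ _" "lower_part g _ _" \<nu>]
      unfolding P_def Pseq_eq_pair_deriv by blast
  qed
qed
end

context uncountable_wellorder
begin

lemma m_reducible_iff_stages:
  assumes f: "baire1 f" and g: "baire1 g"
    and \<nu>: "is_succ_of \<nu> (brank f :: 'o)" and same_rank: "(brank f :: 'o) = brank g"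
  shows "m_reducible f g \<longleftrightarrow>
    (stage_meets_upper f \<nu> \<longrightarrow> stage_meets_upper g \<nu>) \<and>
    (stage_meets_lower f \<nu> \<longrightarrow> stage_meets_lower g \<nu>) \<and>
    (stage_meets_both f \<nu> \<longrightarrow> stage_meets_both g \<nu>)" (is "_ \<longleftrightarrow> ?stages")
proof
  show "m_reducible f g \<Longrightarrow> ?stages"
    using stage_meets_of_m_reducible by blast
next
  assume stages: ?stages
  show "m_reducible f g"
    unfolding m_reducible_iff_reduces
  proof (intro allI impI)
    fix p \<epsilon> :: rat
    assume "\<epsilon> > 0"
    show "\<exists>q \<delta>. \<delta> > 0 \<and>
        reduces (upper_part f p \<epsilon>) (lower_part f p \<epsilon>) (upper_part g q \<delta>) (lower_part g q \<delta>)"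
    proof (cases "(alpha f p \<epsilon> :: 'o) < brank g")
      case True
      then show ?thesis
        by (rule reduces_below_brank[OF f g \<open>\<epsilon> > 0\<close>])
    next
      case False
      then have "is_succ_of \<nu> (alpha f p \<epsilon> :: 'o)"
        using alpha_le_brank[OF f \<open>\<epsilon> > 0\<close>, of p] \<nu> same_rank by simp
      moreover have "is_succ_of \<nu> (brank g :: 'o)"
        using \<nu> same_rank by simp
      moreover have "Pseq f p \<epsilon> \<nu> \<inter> upper_part f p \<epsilon> \<noteq> {} \<Longrightarrow> stage_meets_upper f \<nu>"
        and "Pseq f p \<epsilon> \<nu> \<inter> lower_part f p \<epsilon> \<noteq> {} \<Longrightarrow> stage_meets_lower f \<nu>"
        and "Pseq f p \<epsilon> \<nu> \<inter> upper_part f p \<epsilon> \<noteq> {} \<Longrightarrow> Pseq f p \<epsilon> \<nu> \<inter> lower_part f p \<epsilon> \<noteq> {} \<Longrightarrow>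
          stage_meets_both f \<nu>"
        using \<open>\<epsilon> > 0\<close> unfolding stage_meets_upper_def stage_meets_lower_def stage_meets_both_def
        by blast+
      ultimately show ?thesis
        using stages by (intro reduces_at_last_stage[OF f g \<open>\<epsilon> > 0\<close>]) blast+
    qed
  qed
qed

lemma m_reducible_iff_sides:
  assumes f: "baire1 f" and g: "baire1 g"
    and \<nu>: "is_succ_of \<nu> (brank f :: 'o)" and same_rank: "(brank f :: 'o) = brank g"
  shows "m_reducible f g \<longleftrightarrow>
           two_sided TYPE('o) g
         \<or> (one_sided TYPE('o) f \<and> \<not> right_sided TYPE('o) g \<and> \<not> left_sided TYPE('o) g)
         \<or> (right_sided TYPE('o) f \<and> right_sided TYPE('o) g)
         \<or> (left_sided TYPE('o) f \<and> left_sided TYPE('o) g)"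
proof -
  have \<nu>g: "is_succ_of \<nu> (brank g :: 'o)"
    using \<nu> same_rank by simp
  have "stage_meets_both h \<nu> \<Longrightarrow> stage_meets_upper h \<nu> \<and> stage_meets_lower h \<nu>" for h
    unfolding stage_meets_both_def stage_meets_upper_def stage_meets_lower_def by blast
  then show ?thesis
    using stage_meets_upper_or_lower[OF g \<nu>g]
    unfolding m_reducible_iff_stages[OF assms] one_sided_def
      two_sided_iff[OF f \<nu>] left_sided_iff[OF f \<nu>] right_sided_iff[OF f \<nu>]
      two_sided_iff[OF g \<nu>g] left_sided_iff[OF g \<nu>g] right_sided_iff[OF g \<nu>g]
    by blast
qed

end

theorem mainTheorem2:
  fixes f g :: "cantor \<Rightarrow> real"
  assumes "uncountable (UNIV :: 'o::wellorder set)"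
    and "baire1 f" and "baire1 g"
  shows "((brank f :: 'o) < brank g \<longrightarrow> m_reducible f g) \<and>
         ((brank f :: 'o) = brank g \<longrightarrow>
            (m_reducible f g \<longleftrightarrow>
               is_limit (brank f :: 'o)
             \<or> two_sided TYPE('o) g
             \<or> (one_sided TYPE('o) f \<and> \<not> right_sided TYPE('o) g \<and> \<not> left_sided TYPE('o) g)
             \<or> (right_sided TYPE('o) f \<and> right_sided TYPE('o) g)
             \<or> (left_sided TYPE('o) f \<and> left_sided TYPE('o) g)))"
proof -
  interpret uncountable_wellorder "TYPE('o)"
    by standard (rule assms(1))
  have "m_reducible f g" if "(brank f :: 'o) < brank g"
    using m_reducible_of_brank_less[OF assms(2,3) that] .
  moreover have "m_reducible f g \<longleftrightarrow> is_limit (brank f :: 'o) \<or> two_sided TYPE('o) g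
             \<or> (one_sided TYPE('o) f \<and> \<not> right_sided TYPE('o) g \<and> \<not> left_sided TYPE('o) g)
             \<or> (right_sided TYPE('o) f \<and> right_sided TYPE('o) g)
             \<or> (left_sided TYPE('o) f \<and> left_sided TYPE('o) g)"
    if same_rank: "(brank f :: 'o) = brank g"
  proof (cases "is_limit (brank f :: 'o)")
    case True
    then show ?thesis
      using m_reducible_of_limit[OF assms(2,3) True same_rank] by blast
  next
    case False
    then obtain \<nu> where "is_succ_of \<nu> (brank f :: 'o)"
      using ex_less_brank[OF assms(2)] unfolding is_limit_def by blast
    then show ?thesis
      using m_reducible_iff_sides[OF assms(2,3) _ same_rank] False by blast
  qed
  ultimately show ?thesis
    by blast
qed

end
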